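(* Let $N\ge 2m\ge 0$ be integers. Then, as a polynomial in $j$, $\Delta(N,m)$ can be written as \[\Delta(N,m)=u\,(s_0+s_1v+\cdots+s_kv^k),\qquad s_0,\dots,s_k\in\mathbb{Q},\] with $k\le\big[\frac{2N-3m-1}{2}\big]$, where $u=2j-1$, $v=j(j-1)$. Moreover, if $(N,m)\ne(2,1)$, then $s_0=0$.
   Context: For positive integers $j$ let $\sigma_0(j)=1$, $\sigma_i(j)=\sum_{1\le n_1<\cdots<n_i\le j-1}n_1\cdots n_i$ for $1\le i\le j-1$ and $\sigma_i(j)=0$ for $i\ge j$; let $Q_0(j)=1$ and $Q_k(j)=-\sum_{i=1}^k\sigma_i(j)Q_{k-i}(j)$ for $k\ge1$. For each fixed index these agree on positive integers with polynomials in $j$, and are identified with them. $\binom{\alpha}{m}=\alpha(\alpha-1)\cdots(\alpha-m+1)/m!$ is the generalized binomial coefficient. For $N\ge 2m$ define \[\Delta(N,m)=\binom{j}{m}Q_{N-2m}(j)-(-1)^N\binom{1-j}{m}\sigma_{N-2m}(j),\] a polynomial in $j$ with rational coefficients. $[x]$ denotes the integer part. *)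

theory Defs
  imports Complex_Main
begin

definition sigma :: "nat \<Rightarrow> nat \<Rightarrow> rat" where
  "sigma i j = (\<Sum>S\<in>{S. S \<subseteq> {1..<j} \<and> card S = i}. \<Prod>n\<in>S. of_nat n)"

fun Q :: "nat \<Rightarrow> nat \<Rightarrow> rat" where
  "Q 0 j = 1"
| "Q (Suc k) j = - (\<Sum>i\<in>{1..Suc k}. sigma i j * Q (Suc k - i) j)"

definition Delta :: "nat \<Rightarrow> nat \<Rightarrow> nat \<Rightarrow> rat" where
  "Delta N m j = ((of_nat j) gchoose m) * Q (N - 2*m) j
     - (-1)^N * ((1 - of_nat j) gchoose m) * sigma (N - 2*m) j"

end

(*
  The values sigma_i(j) and Q_k(j) are interpolated by polynomials of degree at most 2i and 2k,
  because their first differences in j are multiples of the previous ones: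
  sigma_{i+1}(j+1) = sigma_{i+1}(j) + j sigma_i(j) and, since sum_k Q_k(j) t^k is the reciprocal of
  sum_i sigma_i(j) t^i = prod_{n<j} (1 + n t), also Q_{k+1}(j+1) = Q_{k+1}(j) - j Q_k(j+1).
  Comparing these difference equations gives the reciprocity sigma_k(x) = (-1)^k Q_k(1 - x)
  between the interpolating polynomials.  Consequently Delta(N,m), a polynomial of degree at most
  2N - 3m, changes sign under x |-> 1 - x; it is therefore 2x - 1 times a polynomial in x(x - 1),
  whose constant term is the value of Delta(N,m) at j = 1, and that value is 0 unless (N,m) = (2,1).
*)
theory Submission
  imports Defs "HOL-Computational_Algebra.Polynomial" "HOL-Computational_Algebra.Formal_Power_Series"
begin

unbundle fps_syntax

section \<open>Recursions for sigma and Q\<close>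

lemma sum_prod_subsets_insert:
  fixes f :: "'a \<Rightarrow> 'b::comm_semiring_1"
  assumes "finite A" "a \<notin> A"
  shows "(\<Sum>S\<in>{S. S \<subseteq> insert a A \<and> card S = Suc i}. \<Prod>x\<in>S. f x)
       = (\<Sum>S\<in>{S. S \<subseteq> A \<and> card S = Suc i}. \<Prod>x\<in>S. f x)
         + f a * (\<Sum>S\<in>{S. S \<subseteq> A \<and> card S = i}. \<Prod>x\<in>S. f x)"
proof -
  let ?P = "\<lambda>k. {S. S \<subseteq> A \<and> card S = k}"
  have fin: "finite (?P k)" for k
    by (rule finite_subset[of _ "Pow A"]) (use assms(1) in auto)
  have fin_mem: "finite S" if "S \<in> ?P k" for S k
    using that finite_subset[OF _ assms(1)] by blast
  have split: "{S. S \<subseteq> insert a A \<and> card S = Suc i} = ?P (Suc i) \<union> insert a ` ?P i"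
  proof (rule set_eqI, rule iffI)
    fix S assume S: "S \<in> {S. S \<subseteq> insert a A \<and> card S = Suc i}"
    show "S \<in> ?P (Suc i) \<union> insert a ` ?P i"
    proof (cases "a \<in> S")
      case True
      then have "S - {a} \<in> ?P i"
        using S assms(1) finite_subset[of "S - {a}" A] by (auto simp: card_Diff_singleton)
      moreover have "S = insert a (S - {a})" using True by blast
      ultimately show ?thesis by blast
    next
      case False
      then show ?thesis using S by auto
    qed
  next
    fix S assume "S \<in> ?P (Suc i) \<union> insert a ` ?P i"
    then show "S \<in> {S. S \<subseteq> insert a A \<and> card S = Suc i}"
    proof
      assume "S \<in> insert a ` ?P i"
      then obtain T where T: "T \<in> ?P i" "S = insert a T" by blast
      have "card S = Suc i"
        using T fin_mem[OF T(1)] assms(2) by (auto simp: card_insert_if)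
      then show ?thesis using T by auto
    qed auto
  qed
  have inj: "inj_on (insert a) (?P i)"
    using assms(2) by (intro inj_onI) (metis insert_ident mem_Collect_eq subset_iff)
  have "(\<Sum>S\<in>insert a ` ?P i. \<Prod>x\<in>S. f x) = (\<Sum>S\<in>?P i. f a * (\<Prod>x\<in>S. f x))"
  proof -
    have "(\<Sum>S\<in>insert a ` ?P i. \<Prod>x\<in>S. f x) = (\<Sum>S\<in>?P i. \<Prod>x\<in>insert a S. f x)"
      by (rule sum.reindex[OF inj, unfolded comp_def])
    also have "\<dots> = (\<Sum>S\<in>?P i. f a * (\<Prod>x\<in>S. f x))"
    proof (rule sum.cong[OF refl])
      fix S assume S: "S \<in> ?P i"
      then have "finite S" "a \<notin> S" using fin_mem[OF S] assms(2) by auto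
      then show "(\<Prod>x\<in>insert a S. f x) = f a * (\<Prod>x\<in>S. f x)" by simp
    qed
    finally show ?thesis .
  qed
  moreover have "?P (Suc i) \<inter> insert a ` ?P i = {}"
    using assms(2) by auto
  ultimately show ?thesis
    by (simp add: split sum.union_disjoint fin sum_distrib_left)
qed

lemma sigma_0 [simp]: "sigma 0 j = 1"
proof -
  have "{S. S \<subseteq> {1..<j} \<and> card S = 0} = {{}}"
    using finite_subset[of _ "{1..<j}"] by auto
  then show ?thesis by (simp add: sigma_def)
qed

lemma sigma_Suc_1 [simp]: "sigma (Suc i) (Suc 0) = 0"
  by (simp add: sigma_def)

lemma sigma_Suc_Suc: "sigma (Suc i) (Suc j) = sigma (Suc i) j + of_nat j * sigma i j"
proof (cases "j = 0")
  case False
  then have "{1..<Suc j} = insert j {1..<j}" by auto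
  then show ?thesis
    by (simp add: sigma_def sum_prod_subsets_insert)
qed (simp add: sigma_def)

lemma Q_Suc_1 [simp]: "Q (Suc k) (Suc 0) = 0"
proof -
  have "(\<Sum>i\<in>{1..Suc k}. sigma i (Suc 0) * Q (Suc k - i) (Suc 0)) = 0"
    by (intro sum.neutral) (auto dest!: Suc_le_D)
  then show ?thesis by (simp only: Q.simps)
qed

declare Q.simps(2) [simp del]

definition sigma_fps :: "nat \<Rightarrow> rat fps" where
  "sigma_fps j = Abs_fps (\<lambda>i. sigma i j)"

definition Q_fps :: "nat \<Rightarrow> rat fps" where
  "Q_fps j = Abs_fps (\<lambda>k. Q k j)"

lemma sigma_fps_mult_Q_fps: "sigma_fps j * Q_fps j = 1"
proof (rule fps_ext)
  fix n
  show "(sigma_fps j * Q_fps j) $ n = 1 $ n"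
  proof (cases n)
    case (Suc k)
    have "{0..Suc k} = insert 0 {1..Suc k}" by auto
    then show ?thesis
      by (simp add: sigma_fps_def Q_fps_def fps_mult_nth Suc Q.simps)
  qed (simp add: sigma_fps_def Q_fps_def fps_mult_nth)
qed

lemma sigma_fps_Suc: "sigma_fps (Suc j) = (1 + fps_const (of_nat j) * fps_X) * sigma_fps j"
proof (rule fps_ext)
  fix n
  show "sigma_fps (Suc j) $ n = ((1 + fps_const (of_nat j) * fps_X) * sigma_fps j) $ n"
    by (cases n) (simp_all add: sigma_fps_def sigma_Suc_Suc algebra_simps)
qed

lemma Q_fps_conv_Q_fps_Suc: "Q_fps j = (1 + fps_const (of_nat j) * fps_X) * Q_fps (Suc j)"
proof -
  have "Q_fps j = Q_fps j * (sigma_fps (Suc j) * Q_fps (Suc j))"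
    by (simp add: sigma_fps_mult_Q_fps)
  also have "\<dots> = (sigma_fps j * Q_fps j) * ((1 + fps_const (of_nat j) * fps_X) * Q_fps (Suc j))"
    by (simp add: sigma_fps_Suc ac_simps)
  finally show ?thesis
    by (simp add: sigma_fps_mult_Q_fps)
qed

lemma Q_Suc_Suc: "Q (Suc k) (Suc j) = Q (Suc k) j - of_nat j * Q k (Suc j)"
  using arg_cong[OF Q_fps_conv_Q_fps_Suc, of "\<lambda>F. F $ Suc k" j]
  by (simp add: Q_fps_def algebra_simps)

section \<open>Polynomials and their values at the positive integers\<close>

lemma poly_eqI_of_nat:
  fixes p q :: "'a::{idom,ring_char_0} poly"
  assumes "\<And>j. j \<ge> 1 \<Longrightarrow> poly p (of_nat j) = poly q (of_nat j)"
  shows "p = q"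
proof (rule ccontr)
  assume "p \<noteq> q"
  then have "finite {x. poly (p - q) x = 0}"
    by (intro poly_roots_finite) simp
  moreover have "of_nat ` {1::nat..} \<subseteq> {x. poly (p - q) x = 0}"
    using assms by auto
  ultimately have "finite (of_nat ` {1::nat..} :: 'a set)"
    by (rule finite_subset[rotated])
  then have "finite {1::nat..}"
    by (rule finite_imageD) (simp add: inj_on_def)
  then show False using infinite_Ici by blast
qed

lemma poly_eq_0_if_periodic:
  fixes p :: "'a::{idom,ring_char_0} poly"
  assumes "\<And>x. poly p (x + 1) = poly p x" and "poly p 1 = 0"
  shows "p = 0"
proof (rule poly_eqI_of_nat)
  fix j :: nat assume "j \<ge> 1"
  then show "poly p (of_nat j) = poly 0 (of_nat j)"
    by (induction j rule: dec_induct) (simp_all add: assms add.commute[of 1])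
qed

lemma poly_antidifference_monom:
  "\<exists>g::'a::field_char_0 poly. degree g \<le> Suc n \<and> (\<forall>x. poly g (x + 1) - poly g x = x ^ n)"
proof (induction n rule: less_induct)
  case (less n)
  then obtain G :: "nat \<Rightarrow> 'a poly"
    where G: "\<And>i. i < n \<Longrightarrow> degree (G i) \<le> Suc i"
             "\<And>i x. i < n \<Longrightarrow> poly (G i) (x + 1) - poly (G i) x = x ^ i"
    by metis
  define g where "g = smult (1 / of_nat (Suc n))
      (monom 1 (Suc n) - (\<Sum>i<n. smult (of_nat (Suc n choose i)) (G i)))"
  have "degree (smult (of_nat (Suc n choose i)) (G i)) \<le> Suc n" if "i < n" for i
    using G(1)[OF that] that degree_smult_le order_trans by fastforce
  then have "degree (monom 1 (Suc n) - (\<Sum>i<n. smult (of_nat (Suc n choose i)) (G i))) \<le> Suc n"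
    by (intro degree_diff_le degree_sum_le) (auto simp: degree_monom_le)
  then have "degree g \<le> Suc n"
    unfolding g_def using degree_smult_le order_trans by blast
  moreover have "poly g (x + 1) - poly g x = x ^ n" for x
  proof -
    have binomial: "(x + 1) ^ Suc n
        = (\<Sum>i<n. of_nat (Suc n choose i) * x ^ i) + of_nat (Suc n) * x ^ n + x ^ Suc n"
    proof -
      have "(x + 1) ^ Suc n = (\<Sum>i\<le>Suc n. of_nat (Suc n choose i) * x ^ i)"
        unfolding binomial_ring[of x 1 "Suc n"] by simp
      then show ?thesis
        by (simp add: lessThan_Suc_atMost[symmetric] del: lessThan_Suc_atMost)
    qed
    have "poly g (x + 1) - poly g x = (1 / of_nat (Suc n)) * (((x + 1) ^ Suc n - x ^ Suc n) -
        (\<Sum>i<n. of_nat (Suc n choose i) * (poly (G i) (x + 1) - poly (G i) x)))"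
      by (simp add: g_def poly_sum poly_monom algebra_simps sum_subtractf)
    also have "(\<Sum>i<n. of_nat (Suc n choose i) * (poly (G i) (x + 1) - poly (G i) x))
        = (\<Sum>i<n. of_nat (Suc n choose i) * x ^ i)"
      using G(2) by (intro sum.cong) auto
    also have "((x + 1) ^ Suc n - x ^ Suc n) - (\<Sum>i<n. of_nat (Suc n choose i) * x ^ i)
        = of_nat (Suc n) * x ^ n"
      by (subst binomial) (simp del: power_Suc)
    finally show ?thesis
      by (simp del: of_nat_Suc)
  qed
  ultimately show ?case by blast
qed

lemma poly_antidifference:
  fixes f :: "'a::field_char_0 poly"
  shows "\<exists>g. degree g \<le> Suc (degree f) \<and> (\<forall>x. poly g (x + 1) - poly g x = poly f x)"
proof -
  obtain G :: "nat \<Rightarrow> 'a poly"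
    where G: "\<And>i. degree (G i) \<le> Suc i" "\<And>i x. poly (G i) (x + 1) - poly (G i) x = x ^ i"
    using poly_antidifference_monom by metis
  define g where "g = (\<Sum>i\<le>degree f. smult (coeff f i) (G i))"
  have "degree (smult (coeff f i) (G i)) \<le> Suc (degree f)" if "i \<le> degree f" for i
    using G(1)[of i] that degree_smult_le order_trans by fastforce
  then have "degree g \<le> Suc (degree f)"
    unfolding g_def by (intro degree_sum_le) auto
  moreover have "poly g (x + 1) - poly g x = poly f x" for x
  proof -
    have "poly g (x + 1) - poly g x = (\<Sum>i\<le>degree f. coeff f i * (poly (G i) (x + 1) - poly (G i) x))"
      by (simp add: g_def poly_sum right_diff_distrib sum_subtractf)
    also have "\<dots> = poly f x"
      unfolding G(2) by (simp add: poly_altdef[of f])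
    finally show ?thesis .
  qed
  ultimately show ?thesis by blast
qed

lemma poly_interpolant_from_differences:
  fixes f :: "nat \<Rightarrow> 'a::field_char_0" and r :: "'a poly"
  assumes "\<And>j. j \<ge> 1 \<Longrightarrow> f (Suc j) = f j + poly r (of_nat j)"
  shows "\<exists>p. degree p \<le> Suc (degree r) \<and> (\<forall>j\<ge>1. poly p (of_nat j) = f j)"
proof -
  obtain g where g: "degree g \<le> Suc (degree r)" "\<And>x. poly g (x + 1) - poly g x = poly r x"
    using poly_antidifference by blast
  define p where "p = g + [:f 1 - poly g 1:]"
  have "degree p \<le> Suc (degree r)"
    using g(1) by (simp add: p_def degree_add_le)
  moreover have "poly p (of_nat j) = f j" if "j \<ge> 1" for j
    using that
  proof (induction j rule: dec_induct)
    case (step n)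
    then show ?case
      using assms[of n] g(2)[of "of_nat n"] by (simp add: p_def algebra_simps)
  qed (simp add: p_def)
  ultimately show ?thesis by blast
qed

section \<open>Interpolating polynomials for sigma and Q\<close>

lemma sigma_interpolant_ex:
  "\<exists>p::rat poly. degree p \<le> 2 * i \<and> (\<forall>j\<ge>1. poly p (of_nat j) = sigma i j)"
proof (induction i)
  case 0
  show ?case by (intro exI[of _ 1]) simp
next
  case (Suc i)
  then obtain p :: "rat poly" where p: "degree p \<le> 2 * i" "\<forall>j\<ge>1. poly p (of_nat j) = sigma i j"
    by blast
  have "degree ([:0, 1:] * p) \<le> Suc (2 * i)"
    using p(1) by (simp add: degree_mult_le order_trans)
  moreover have "sigma (Suc i) (Suc j) = sigma (Suc i) j + poly ([:0, 1:] * p) (of_nat j)" if "j \<ge> 1" for j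
    using p(2) that by (simp add: sigma_Suc_Suc)
  ultimately obtain p' where "degree p' \<le> Suc (Suc (2 * i))" "\<forall>j\<ge>1. poly p' (of_nat j) = sigma (Suc i) j"
    using poly_interpolant_from_differences[of "sigma (Suc i)" "[:0, 1:] * p"] by (meson Suc_le_mono order.trans)
  then show ?case by auto
qed

lemma Q_interpolant_ex:
  "\<exists>q::rat poly. degree q \<le> 2 * k \<and> (\<forall>j\<ge>1. poly q (of_nat j) = Q k j)"
proof (induction k)
  case 0
  show ?case by (intro exI[of _ 1]) simp
next
  case (Suc k)
  then obtain q :: "rat poly" where q: "degree q \<le> 2 * k" "\<forall>j\<ge>1. poly q (of_nat j) = Q k j"
    by blast
  define r where "r = - ([:0, 1:] * pcompose q [:1, 1:])"
  have "degree r \<le> Suc (2 * k)"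
    using q(1) by (simp add: r_def degree_pcompose)
  moreover have "Q (Suc k) (Suc j) = Q (Suc k) j + poly r (of_nat j)" if "j \<ge> 1" for j
    using q(2)[rule_format, of "Suc j"] that by (simp add: r_def poly_pcompose Q_Suc_Suc add.commute)
  ultimately obtain q' where "degree q' \<le> Suc (Suc (2 * k))" "\<forall>j\<ge>1. poly q' (of_nat j) = Q (Suc k) j"
    using poly_interpolant_from_differences[of "Q (Suc k)" r] by (meson Suc_le_mono order.trans)
  then show ?case by auto
qed

definition sigma_poly :: "nat \<Rightarrow> rat poly" where
  "sigma_poly i = (SOME p. degree p \<le> 2 * i \<and> (\<forall>j\<ge>1. poly p (of_nat j) = sigma i j))"

definition Q_poly :: "nat \<Rightarrow> rat poly" where
  "Q_poly k = (SOME q. degree q \<le> 2 * k \<and> (\<forall>j\<ge>1. poly q (of_nat j) = Q k j))"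

lemma degree_sigma_poly: "degree (sigma_poly i) \<le> 2 * i"
  and poly_sigma_poly: "j \<ge> 1 \<Longrightarrow> poly (sigma_poly i) (of_nat j) = sigma i j"
  using someI_ex[OF sigma_interpolant_ex[of i]] unfolding sigma_poly_def[symmetric] by auto

lemma degree_Q_poly: "degree (Q_poly k) \<le> 2 * k"
  and poly_Q_poly: "j \<ge> 1 \<Longrightarrow> poly (Q_poly k) (of_nat j) = Q k j"
  using someI_ex[OF Q_interpolant_ex[of k]] unfolding Q_poly_def[symmetric] by auto

lemma sigma_poly_0: "sigma_poly 0 = 1"
  by (rule poly_eqI_of_nat) (simp add: poly_sigma_poly)

lemma Q_poly_0: "Q_poly 0 = 1"
  by (rule poly_eqI_of_nat) (simp add: poly_Q_poly)

lemma poly_sigma_poly_Suc_1: "poly (sigma_poly (Suc i)) 1 = 0"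
  using poly_sigma_poly[of 1 "Suc i"] by simp

lemma poly_sigma_poly_Suc_shift:
  "poly (sigma_poly (Suc i)) (x + 1) = poly (sigma_poly (Suc i)) x + x * poly (sigma_poly i) x"
proof -
  have "pcompose (sigma_poly (Suc i)) [:1, 1:] = sigma_poly (Suc i) + [:0, 1:] * sigma_poly i"
  proof (rule poly_eqI_of_nat)
    fix j :: nat assume "j \<ge> 1"
    then show "poly (pcompose (sigma_poly (Suc i)) [:1, 1:]) (of_nat j)
        = poly (sigma_poly (Suc i) + [:0, 1:] * sigma_poly i) (of_nat j)"
      using poly_sigma_poly[of "Suc j" "Suc i"]
      by (simp add: poly_pcompose poly_sigma_poly sigma_Suc_Suc add.commute)
  qed
  from arg_cong[OF this, of "\<lambda>p. poly p x"] show ?thesis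
    by (simp add: poly_pcompose add.commute)
qed

lemma poly_Q_poly_Suc_shift:
  "poly (Q_poly (Suc k)) (x + 1) = poly (Q_poly (Suc k)) x - x * poly (Q_poly k) (x + 1)"
proof -
  have "pcompose (Q_poly (Suc k)) [:1, 1:] = Q_poly (Suc k) - [:0, 1:] * pcompose (Q_poly k) [:1, 1:]"
  proof (rule poly_eqI_of_nat)
    fix j :: nat assume "j \<ge> 1"
    then show "poly (pcompose (Q_poly (Suc k)) [:1, 1:]) (of_nat j)
        = poly (Q_poly (Suc k) - [:0, 1:] * pcompose (Q_poly k) [:1, 1:]) (of_nat j)"
      using poly_Q_poly[of "Suc j" "Suc k"] poly_Q_poly[of "Suc j" k]
      by (simp add: poly_pcompose poly_Q_poly Q_Suc_Suc add.commute)
  qed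
  from arg_cong[OF this, of "\<lambda>p. poly p x"] show ?thesis
    by (simp add: poly_pcompose add.commute)
qed

lemma poly_Q_poly_Suc_0: "poly (Q_poly (Suc k)) 0 = 0"
  using poly_Q_poly_Suc_shift[of k 0] poly_Q_poly[of 1 "Suc k"] by simp

lemma poly_sigma_poly_reflect: "poly (sigma_poly k) x = (-1) ^ k * poly (Q_poly k) (1 - x)"
proof (induction k arbitrary: x)
  case 0
  show ?case by (simp add: sigma_poly_0 Q_poly_0)
next
  case (Suc k)
  define e where "e = smult ((-1) ^ Suc k) (pcompose (Q_poly (Suc k)) [:1, -1:]) - sigma_poly (Suc k)"
  have "e = 0"
  proof (rule poly_eq_0_if_periodic)
    fix y :: rat
    show "poly e (y + 1) = poly e y"
      using poly_Q_poly_Suc_shift[of k "- y"] poly_sigma_poly_Suc_shift[of k y] Suc.IH[of y]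
      by (simp add: e_def poly_pcompose algebra_simps)
  next
    show "poly e 1 = 0"
      by (simp add: e_def poly_pcompose poly_Q_poly_Suc_0 poly_sigma_poly_Suc_1)
  qed
  from arg_cong[OF this, of "\<lambda>p. poly p x"] show ?case
    by (simp add: e_def poly_pcompose)
qed

section \<open>Polynomials symmetric under x \<mapsto> 1 - x\<close>

lemma poly_cancel_nonzero_factor:
  fixes A p q :: "'a::{idom,ring_char_0} poly"
  assumes "A \<noteq> 0" and "\<And>x. poly A x * poly p x = poly A x * poly q x"
  shows "p = q"
proof -
  have "A * (p - q) = 0"
    by (subst poly_all_0_iff_0[symmetric]) (simp add: assms(2) right_diff_distrib)
  then show ?thesis using assms(1) by simp
qed

lemma symmetric_poly_peel:
  fixes E :: "'a::field_char_0 poly"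
  assumes sym: "\<And>x. poly E (1 - x) = poly E x" and deg: "degree E \<noteq> 0"
  obtains c G where "\<And>x. poly E x = c + x * (x - 1) * poly G x"
    and "degree E = degree G + 2" and "\<And>x. poly G (1 - x) = poly G x"
proof -
  define c where "c = poly E 0"
  define E0 where "E0 = E - [:c:]"
  have "poly E0 0 = 0" by (simp add: E0_def c_def)
  then obtain F where F: "E0 = [:0, 1:] * F"
    using poly_eq_0_iff_dvd[of E0 0] by (auto elim: dvdE)
  have "poly E0 1 = 0" using sym[of 1] by (simp add: E0_def c_def)
  then have "poly F 1 = 0" using F by simp
  then obtain G where G: "F = [:-1, 1:] * G"
    using poly_eq_0_iff_dvd[of F 1] by (auto elim: dvdE)
  have E0_eq: "E0 = [:0, -1, 1:] * G" using F G by simp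
  have poly_E: "poly E x = c + x * (x - 1) * poly G x" for x
    using arg_cong[OF E0_eq, of "\<lambda>p. poly p x"] by (simp add: E0_def algebra_simps)
  have "G \<noteq> 0" using deg E0_eq E0_def by auto
  have "degree E0 = degree E"
    unfolding E0_def using deg degree_add_eq_left[of "[:- c:]" E]
    by (simp add: diff_conv_add_uminus del: add_uminus_conv_diff)
  moreover have "degree E0 = degree ([:0, -1, 1:] :: 'a poly) + degree G"
    unfolding E0_eq using \<open>G \<noteq> 0\<close> by (intro degree_mult_eq) simp_all
  ultimately have "degree E = degree G + 2" by simp
  moreover have "poly G (1 - x) = poly G x" for x
  proof -
    have "pcompose G [:1, -1:] = G"
    proof (rule poly_cancel_nonzero_factor[of "[:0, -1, 1:]"])
      fix y :: 'a
      show "poly [:0, -1, 1:] y * poly (pcompose G [:1, -1:]) y = poly [:0, -1, 1:] y * poly G y"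
        using sym[of y] by (simp add: poly_E poly_pcompose algebra_simps)
    qed simp
    from arg_cong[OF this, of "\<lambda>p. poly p x"] show ?thesis
      by (simp add: poly_pcompose)
  qed
  ultimately show ?thesis using that poly_E by blast
qed

lemma symmetric_poly_in_x_x_minus_1:
  fixes E :: "'a::field_char_0 poly"
  assumes "\<And>x. poly E (1 - x) = poly E x"
  shows "\<exists>S. (\<forall>x. poly E x = poly S (x * (x - 1))) \<and> 2 * degree S \<le> degree E"
  using assms
proof (induction "degree E" arbitrary: E rule: less_induct)
  case less
  show ?case
  proof (cases "degree E = 0")
    case True
    then obtain c where "E = [:c:]" by (rule degree_eq_zeroE)
    then show ?thesis by (intro exI[of _ E]) simp
  next
    case False
    then obtain c G where G: "\<And>x. poly E x = c + x * (x - 1) * poly G x"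
      "degree E = degree G + 2" "\<And>x. poly G (1 - x) = poly G x"
      using symmetric_poly_peel less.prems by blast
    then obtain S where "\<forall>x. poly G x = poly S (x * (x - 1))" "2 * degree S \<le> degree G"
      using less.hyps[of G] by auto
    then show ?thesis
      using G(1,2) degree_pCons_le[of c S]
      by (intro exI[of _ "pCons c S"]) auto
  qed
qed

lemma antisymmetric_poly_factor:
  fixes D :: "'a::field_char_0 poly"
  assumes anti: "\<And>x. poly D (1 - x) = - poly D x" and "D \<noteq> 0"
  shows "\<exists>S. (\<forall>x. poly D x = (2 * x - 1) * poly S (x * (x - 1))) \<and> 1 + 2 * degree S \<le> degree D"
proof -
  have "poly D (1 / 2) = 0" using anti[of "1 / 2"] by simp
  then obtain E where E: "D = [:- (1 / 2), 1:] * E"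
    using poly_eq_0_iff_dvd by (blast elim: dvdE)
  have "E \<noteq> 0" using E assms(2) by auto
  then have "degree D = degree ([:- (1 / 2), 1:] :: 'a poly) + degree E"
    unfolding E by (intro degree_mult_eq) simp_all
  then have deg_D: "degree D = 1 + degree E" by simp
  have E_reflect: "pcompose E [:1, -1:] = E"
  proof (rule poly_cancel_nonzero_factor[of "[:- (1 / 2), 1:]"])
    fix y :: 'a
    show "poly [:- (1 / 2), 1:] y * poly (pcompose E [:1, -1:]) y = poly [:- (1 / 2), 1:] y * poly E y"
      using anti[of y] by (simp add: E poly_pcompose field_simps)
  qed simp
  have "poly E (1 - x) = poly E x" for x
    using arg_cong[OF E_reflect, of "\<lambda>p. poly p x"] by (simp add: poly_pcompose)
  then obtain S where S: "\<forall>x. poly E x = poly S (x * (x - 1))" "2 * degree S \<le> degree E"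
    using symmetric_poly_in_x_x_minus_1 by blast
  have "poly D x = (2 * x - 1) * poly (smult (1 / 2) S) (x * (x - 1))" for x
    using S(1) by (simp add: E algebra_simps)
  moreover have "1 + 2 * degree (smult (1 / 2) S) \<le> degree D"
    using deg_D S(2) by simp
  ultimately show ?thesis by blast
qed

lemma antisymmetric_poly_expansion:
  fixes D :: "'a::field_char_0 poly"
  assumes "\<And>x. poly D (1 - x) = - poly D x"
  shows "\<exists>(k::int) s. 2 * k + 1 \<le> int (degree D) \<and>
           (\<forall>x. poly D x = (2 * x - 1) * (\<Sum>i<nat (k + 1). s i * (x * (x - 1)) ^ i)) \<and>
           s 0 = poly D 1"
proof (cases "D = 0")
  case True
  then show ?thesis by (intro exI[of _ "-1"] exI[of _ "\<lambda>_. 0"]) simp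
next
  case False
  then obtain S where S: "\<And>x. poly D x = (2 * x - 1) * poly S (x * (x - 1))"
    "1 + 2 * degree S \<le> degree D"
    using antisymmetric_poly_factor assms by blast
  have "poly S y = (\<Sum>i<nat (int (degree S) + 1). coeff S i * y ^ i)" for y
    by (simp add: poly_altdef lessThan_Suc_atMost nat_add_distrib)
  moreover have "coeff S 0 = poly D 1"
    by (simp add: S(1) poly_0_coeff_0)
  ultimately show ?thesis
    using S by (intro exI[of _ "int (degree S)"] exI[of _ "coeff S"]) auto
qed

section \<open>The polynomial Delta\<close>

definition gbinomial_poly :: "nat \<Rightarrow> 'a::field_char_0 poly" where
  "gbinomial_poly m = smult (1 / fact m) (\<Prod>i\<in>{0..<m}. [:- of_nat i, 1:])"

lemma poly_gbinomial_poly: "poly (gbinomial_poly m) a = a gchoose m"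
  by (simp add: gbinomial_poly_def poly_prod gbinomial_prod_rev)

lemma degree_gbinomial_poly: "degree (gbinomial_poly m :: 'a::field_char_0 poly) \<le> m"
proof -
  have "degree (\<Prod>i\<in>{0..<m}. [:- of_nat i, 1:] :: 'a poly) \<le> (\<Sum>i\<in>{0..<m}. degree ([:- of_nat i, 1:] :: 'a poly))"
    using degree_prod_sum_le[of "{0..<m}" "\<lambda>i. [:- of_nat i, 1:] :: 'a poly"] by (simp add: comp_def)
  also have "\<dots> = m" by simp
  finally show ?thesis
    unfolding gbinomial_poly_def using degree_smult_le order_trans by blast
qed

definition Delta_poly :: "nat \<Rightarrow> nat \<Rightarrow> rat poly" where
  "Delta_poly N m = gbinomial_poly m * Q_poly (N - 2 * m)
     - smult ((-1) ^ N) (pcompose (gbinomial_poly m) [:1, -1:] * sigma_poly (N - 2 * m))"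

lemma poly_Delta_poly: "j \<ge> 1 \<Longrightarrow> poly (Delta_poly N m) (of_nat j) = Delta N m j"
  by (simp add: Delta_poly_def Delta_def poly_pcompose poly_gbinomial_poly poly_Q_poly poly_sigma_poly)

lemma Delta_poly_reflect:
  assumes "2 * m \<le> N"
  shows "poly (Delta_poly N m) (1 - x) = - poly (Delta_poly N m) x"
proof -
  define n where "n = N - 2 * m"
  have "N = n + 2 * m" using assms by (simp add: n_def)
  then have sign: "(-1 :: rat) ^ N = (-1) ^ n"
    by (simp add: power_add power_mult)
  have "poly (Q_poly n) (1 - x) = (-1) ^ n * poly (sigma_poly n) x"
    and "poly (sigma_poly n) (1 - x) = (-1) ^ n * poly (Q_poly n) x"
    by (simp_all add: poly_sigma_poly_reflect power_mult_distrib flip: power_add mult.assoc)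
  then show ?thesis
    by (simp add: Delta_poly_def poly_pcompose poly_gbinomial_poly sign flip: n_def)
qed

lemma degree_Delta_poly:
  assumes "2 * m \<le> N"
  shows "degree (Delta_poly N m) \<le> 2 * N - 3 * m"
proof -
  define n where "n = N - 2 * m"
  have "degree (gbinomial_poly m * Q_poly n) \<le> m + 2 * n"
    using degree_mult_le[of "gbinomial_poly m" "Q_poly n"] degree_gbinomial_poly[of m, where 'a = rat]
      degree_Q_poly[of n]
    by linarith
  moreover have "degree (pcompose (gbinomial_poly m :: rat poly) [:1, -1:]) \<le> m"
    using degree_gbinomial_poly[of m] by (simp add: degree_pcompose)
  then have "degree (smult ((-1) ^ N) (pcompose (gbinomial_poly m) [:1, -1:] * sigma_poly n)) \<le> m + 2 * n"
    using degree_mult_le[of "pcompose (gbinomial_poly m) [:1, -1:]" "sigma_poly n"] degree_sigma_poly[of n]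
    by (simp add: order_trans)
  ultimately have "degree (Delta_poly N m) \<le> m + 2 * n"
    unfolding Delta_poly_def n_def by (intro degree_diff_le)
  then show ?thesis using assms by (simp add: n_def)
qed

lemma Delta_at_1:
  assumes "2 * m \<le> N" and "(N, m) \<noteq> (2, 1)"
  shows "Delta N m 1 = 0"
proof (cases "N - 2 * m")
  case 0
  then have N: "N = 2 * m" using assms by simp
  show ?thesis
  proof (cases "m \<le> 1")
    case True
    then have "m = 0" using assms N by auto
    then show ?thesis by (simp add: Delta_def N)
  next
    case False
    then have "(1::rat) gchoose m = 0" and "(0::rat) gchoose m = 0"
      by (simp_all add: gbinomial_0_left flip: binomial_gbinomial[of 1, simplified])
    then show ?thesis by (simp add: Delta_def 0)
  qed
qed (simp add: Delta_def Q_Suc_1)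

theorem proposition2p5:
  fixes N m :: nat
  assumes "2 * m \<le> N"
  shows "\<exists>(k::int) (s::nat \<Rightarrow> rat).
           k \<le> (2 * int N - 3 * int m - 1) div 2 \<and>
           (\<forall>j::nat. j \<ge> 1 \<longrightarrow>
              Delta N m j = (2 * of_nat j - 1) *
                 (\<Sum>i<nat (k + 1). s i * (of_nat j * (of_nat j - 1)) ^ i)) \<and>
           ((N, m) \<noteq> (2, 1) \<longrightarrow> s 0 = 0)"
proof -
  obtain k s where k: "2 * k + 1 \<le> int (degree (Delta_poly N m))"
    and expansion: "\<And>x. poly (Delta_poly N m) x = (2 * x - 1) * (\<Sum>i<nat (k + 1). s i * (x * (x - 1)) ^ i)"
    and s0: "s 0 = poly (Delta_poly N m) 1"
    using antisymmetric_poly_expansion[OF Delta_poly_reflect[OF assms]] by blast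
  have "k \<le> (2 * int N - 3 * int m - 1) div 2"
    using k degree_Delta_poly[OF assms] assms by linarith
  moreover have "\<forall>j::nat. j \<ge> 1 \<longrightarrow> Delta N m j = (2 * of_nat j - 1) *
      (\<Sum>i<nat (k + 1). s i * (of_nat j * (of_nat j - 1)) ^ i)"
    using expansion by (simp flip: poly_Delta_poly)
  moreover have "(N, m) \<noteq> (2, 1) \<longrightarrow> s 0 = 0"
    using s0 poly_Delta_poly[of 1 N m] Delta_at_1[OF assms] by simp
  ultimately show ?thesis by blast
qed

end
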